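(* Let $X_1,\ldots,X_m$ be variables, let $r,s\ge1$, $t=rs$, let $c_1,\ldots,c_t\in\mathbb{N}^m$ with $\min_i c_{ij}=0$ for each $1\le j\le m$, and let $\rho:\{1,\ldots,r\}\times\{1,\ldots,s\}\to\{1,\ldots,t\}$ be a bijection. Then there is at most one factorisation of $\sum_{i=1}^t X^{c_i}$ of the form $(X^{a_1}+\cdots+X^{a_r})(X^{b_1}+\cdots+X^{b_s})=X^{c_1}+\cdots+X^{c_t}$ with bijection $\rho$, i.e. at most one pair of sequences $(a_1,\ldots,a_r)$, $(b_1,\ldots,b_s)$ in $\mathbb{N}^m$ with $a_i+b_j=c_{\rho(i,j)}$ for all $i,j$.
   Context: $\mathbb{N}=\{0,1,2,\ldots\}$; for $\gamma=(\gamma_1,\ldots,\gamma_m)\in\mathbb{N}^m$, $X^\gamma=\prod_{j=1}^m X_j^{\gamma_j}$. A factorisation of $\sum_{i=1}^t X^{c_i}$ of the given form is specified by sequences $(a_1,\ldots,a_r)$, $(b_1,\ldots,b_s)$ in $\mathbb{N}^m$ and a bijection $\rho:\{1,\ldots,r\}\times\{1,\ldots,s\}\to\{1,\ldots,t\}$ with $a_i+b_j=c_{\rho(i,j)}$ for all $i,j$. *)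

theory Defs
  imports Main
begin

end

theory Submission
  imports Defs
begin

text \<open>In each coordinate some entry c(\<rho>(i0, j0)) is zero, which forces a(i0) = b(j0) = 0 in
  that coordinate for every factorisation. Hence a(i) = c(\<rho>(i, j0)) and b(j) = c(\<rho>(i0, j))
  are determined by c alone.\<close>

lemma sum_decomposition_unique_if_zero:
  fixes a b a' b' :: "_ \<Rightarrow> 'a :: canonically_ordered_monoid_add"
  assumes "i\<^sub>0 \<in> I" "j\<^sub>0 \<in> J" "a i\<^sub>0 + b j\<^sub>0 = 0"
    and "\<forall>i\<in>I. \<forall>j\<in>J. a i + b j = a' i + b' j"
  shows "(\<forall>i\<in>I. a i = a' i) \<and> (\<forall>j\<in>J. b j = b' j)"
proof -
  have "a' i\<^sub>0 + b' j\<^sub>0 = 0"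
    using assms by simp
  then have zeros: "a i\<^sub>0 = 0" "b j\<^sub>0 = 0" "a' i\<^sub>0 = 0" "b' j\<^sub>0 = 0"
    using assms(3) by simp_all
  have "a i = a' i" if "i \<in> I" for i
    using assms(2,4) zeros that by force
  moreover have "b j = b' j" if "j \<in> J" for j
    using assms(1,4) zeros that by force
  ultimately show ?thesis
    by blast
qed

lemma Min_image_attained:
  fixes f :: "_ \<Rightarrow> 'a :: linorder"
  assumes "finite A" "A \<noteq> {}" "Min (f ` A) = z"
  obtains x where "x \<in> A" "f x = z"
proof -
  have "Min (f ` A) \<in> f ` A"
    using assms(1,2) by (intro Min_in) auto
  then obtain x where "x \<in> A" "Min (f ` A) = f x"
    by blast
  then show thesis
    using that assms(3) by simp
qed

theorem mainTheorem6:
  fixes m r s t :: nat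
    and c :: "nat \<Rightarrow> nat \<Rightarrow> nat"
    and \<rho> :: "nat \<times> nat \<Rightarrow> nat"
    and a b a' b' :: "nat \<Rightarrow> nat \<Rightarrow> nat"
  assumes "r \<ge> 1" and "s \<ge> 1" and "t = r * s"
    and "\<forall>j\<in>{1..m}. Min ((\<lambda>i. c i j) ` {1..t}) = 0"
    and "bij_betw \<rho> ({1..r} \<times> {1..s}) {1..t}"
    and "\<forall>i\<in>{1..r}. \<forall>j\<in>{1..s}. \<forall>k\<in>{1..m}. a i k + b j k = c (\<rho> (i, j)) k"
    and "\<forall>i\<in>{1..r}. \<forall>j\<in>{1..s}. \<forall>k\<in>{1..m}. a' i k + b' j k = c (\<rho> (i, j)) k"
  shows "(\<forall>i\<in>{1..r}. \<forall>k\<in>{1..m}. a i k = a' i k) \<and>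
         (\<forall>j\<in>{1..s}. \<forall>k\<in>{1..m}. b j k = b' j k)"
proof -
  have "(\<forall>i\<in>{1..r}. a i k = a' i k) \<and> (\<forall>j\<in>{1..s}. b j k = b' j k)" if k: "k \<in> {1..m}" for k
  proof -
    obtain n where n: "n \<in> {1..t}" "c n k = 0"
      using Min_image_attained[of "{1..t}" "\<lambda>i. c i k" 0] assms(1-4) k by auto
    moreover have "{1..t} = \<rho> ` ({1..r} \<times> {1..s})"
      using assms(5) by (simp add: bij_betw_def)
    ultimately obtain p where "p \<in> {1..r} \<times> {1..s}" "\<rho> p = n"
      by (metis imageE)
    then obtain i\<^sub>0 j\<^sub>0 where ij\<^sub>0: "i\<^sub>0 \<in> {1..r}" "j\<^sub>0 \<in> {1..s}" "\<rho> (i\<^sub>0, j\<^sub>0) = n"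
      by (cases p) auto
    show ?thesis
    proof (rule sum_decomposition_unique_if_zero[OF ij\<^sub>0(1,2)])
      show "a i\<^sub>0 k + b j\<^sub>0 k = 0"
        using assms(6) ij\<^sub>0 n k by auto
      show "\<forall>i\<in>{1..r}. \<forall>j\<in>{1..s}. a i k + b j k = a' i k + b' j k"
        using assms(6,7) k by auto
    qed
  qed
  then show ?thesis
    by blast
qed

end
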